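(* Let $V$ be a finite-dimensional real vector space with a Lorentzian inner product $g$, and let $V=E_1\oplus\cdots\oplus E_r$ ($r\ge1$) be a $g$-orthogonal direct sum of subspaces on each of which $g$ is non-degenerate, with $E_r$ Lorentzian. For $1\le\beta\le r$ let $g_\beta(X,Y)=g(X_\beta,Y_\beta)$, where $X_\beta,Y_\beta$ are the $E_\beta$-components. Let $p\in E_r$ be a non-zero light-like vector and $\theta=g(p,\cdot)$. Let $\bar g_1=g,\bar g_2,\dots,\bar g_{r+1}$ be linearly independent symmetric bilinear forms on $V$ with $$\bar g_\alpha=\sum_{\beta=1}^r C_{\beta\alpha}g_\beta+C_{r+1\,\alpha}\,\theta\otimes\theta,$$ and assume $C_{r\alpha}=0$ and $C_{r+1\,\alpha}\neq0$ for all $2\le\alpha\le r+1$. Let $W=\bigcap_{\alpha=2}^{r+1}\ker\bar g_\alpha$. Then $$W=\{X\in E_r\mid\theta(X)=0\},\qquad W^{\perp_g}=E_1\oplus\cdots\oplus E_{r-1}\oplus\mathbb{R}p.$$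
   Context: For a symmetric bilinear form $b$ on $V$, $\ker b=\{X\in V\mid b(X,Y)=0\ \forall Y\in V\}$; $W^{\perp_g}$ is the $g$-orthogonal complement of $W$ in $V$. *)

theory Defs
  imports "HOL-Analysis.Analysis"
begin

definition sym_bilinear :: "('v::euclidean_space \<Rightarrow> 'v \<Rightarrow> real) \<Rightarrow> bool" where
  "sym_bilinear b \<longleftrightarrow> bilinear b \<and> (\<forall>x y. b x y = b y x)"

definition form_ker :: "('v \<Rightarrow> 'v \<Rightarrow> real) \<Rightarrow> 'v set" where
  "form_ker b = {X. \<forall>Y. b X Y = 0}"

definition g_perp :: "('v \<Rightarrow> 'v \<Rightarrow> real) \<Rightarrow> 'v set \<Rightarrow> 'v set" where
  "g_perp g W = {X. \<forall>Y\<in>W. g X Y = 0}"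

definition nondeg_on :: "('v::real_vector \<Rightarrow> 'v \<Rightarrow> real) \<Rightarrow> 'v set \<Rightarrow> bool" where
  "nondeg_on g U \<longleftrightarrow> (\<forall>x\<in>U. (\<forall>y\<in>U. g x y = 0) \<longrightarrow> x = 0)"

definition neg_index_on :: "('v::euclidean_space \<Rightarrow> 'v \<Rightarrow> real) \<Rightarrow> 'v set \<Rightarrow> nat" where
  "neg_index_on g U = Max {dim S | S. subspace S \<and> S \<subseteq> U \<and> (\<forall>x\<in>S. x \<noteq> 0 \<longrightarrow> g x x < 0)}"

definition lorentzian_on :: "('v::euclidean_space \<Rightarrow> 'v \<Rightarrow> real) \<Rightarrow> 'v set \<Rightarrow> bool" where
  "lorentzian_on g U \<longleftrightarrow> nondeg_on g U \<and> neg_index_on g U = 1"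

definition is_decomp :: "(nat \<Rightarrow> 'v::real_vector set) \<Rightarrow> nat \<Rightarrow> 'v \<Rightarrow> (nat \<Rightarrow> 'v) \<Rightarrow> bool" where
  "is_decomp E r v x \<longleftrightarrow> (\<forall>\<beta>\<in>{1..r}. x \<beta> \<in> E \<beta>) \<and> (\<forall>\<beta>. \<beta> \<notin> {1..r} \<longrightarrow> x \<beta> = 0)
      \<and> v = (\<Sum>\<beta>=1..r. x \<beta>)"

definition direct_sum :: "(nat \<Rightarrow> 'v::real_vector set) \<Rightarrow> nat \<Rightarrow> bool" where
  "direct_sum E r \<longleftrightarrow> (\<forall>v. \<exists>!x. is_decomp E r v x)"

definition component :: "(nat \<Rightarrow> 'v::real_vector set) \<Rightarrow> nat \<Rightarrow> nat \<Rightarrow> 'v \<Rightarrow> 'v" where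
  "component E r \<beta> v = (THE x. is_decomp E r v x) \<beta>"

definition g_comp :: "('v::real_vector \<Rightarrow> 'v \<Rightarrow> real) \<Rightarrow> (nat \<Rightarrow> 'v set) \<Rightarrow> nat \<Rightarrow> nat \<Rightarrow> 'v \<Rightarrow> 'v \<Rightarrow> real" where
  "g_comp g E r \<beta> X Y = g (component E r \<beta> X) (component E r \<beta> Y)"

end

theory Submission
  imports Defs "HOL-Library.Function_Algebras"
begin

(* Write X = X_1 + ... + X_r and theta = g(p, -).  Testing gbar_alpha(X, -) against vectors
   of a single summand E_gamma isolates the coefficient C_gamma_alpha: testing against E_r
   (where C_r_alpha = 0) leaves C_(r+1)_alpha theta(X) theta(-), so theta(X) = 0, and testing
   against E_beta, beta < r, leaves C_beta_alpha g(X_beta, -), so X_beta = 0 by non-degeneracy,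
   as soon as some C_beta_alpha is non-zero.  That such an alpha exists is a dimension count:
   otherwise the r independent forms gbar_2, ..., gbar_(r+1) would all be combinations of the
   r - 1 forms g_gamma (gamma < r, gamma <> beta) and theta (x) theta.  The orthogonal complement
   of W = ker theta /\ E_r is computed inside the non-degenerate E_r. *)

lemma sum_fun_apply: "(\<Sum>i\<in>A. f i) x = (\<Sum>i\<in>A. f i x)"
  by (induction A rule: infinite_finite_induct) auto

context vector_space
begin

lemma independent_family_image:
  assumes "finite A" and indep: "\<And>c. (\<Sum>i\<in>A. scale (c i) (f i)) = 0 \<Longrightarrow> \<forall>i\<in>A. c i = 0"
  shows "inj_on f A" and "independent (f ` A)"
proof -
  show inj: "inj_on f A"
  proof (rule inj_onI, rule ccontr)
    fix a b assume a: "a \<in> A" and b: "b \<in> A" and fab: "f a = f b" and "a \<noteq> b"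
    define c :: "_ \<Rightarrow> 'a" where "c i = (if i = a then 1 else if i = b then -1 else 0)" for i
    have "(\<Sum>i\<in>A. scale (c i) (f i)) = (\<Sum>i\<in>A. (if i = a then f a else 0) - (if i = b then f b else 0))"
      by (rule sum.cong) (auto simp: c_def \<open>a \<noteq> b\<close>)
    also have "\<dots> = 0"
      using \<open>finite A\<close> a b fab by (simp add: sum_subtractf)
    finally have "c a = 0" using indep a by blast
    then show False by (simp add: c_def)
  qed
  show "independent (f ` A)"
  proof (rule independent_if_scalars_zero)
    fix u v assume u: "(\<Sum>v\<in>f ` A. scale (u v) v) = 0" and "v \<in> f ` A"
    have "(\<Sum>i\<in>A. scale (u (f i)) (f i)) = 0"
      using u by (simp add: sum.reindex[OF inj])
    from indep[OF this] \<open>v \<in> f ` A\<close> show "u v = 0" by auto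
  qed (use \<open>finite A\<close> in simp)
qed

lemma card_le_if_independent_family_in_span:
  assumes "finite A" "finite T"
    and "\<And>c. (\<Sum>i\<in>A. scale (c i) (f i)) = 0 \<Longrightarrow> \<forall>i\<in>A. c i = 0"
    and "f ` A \<subseteq> span T"
  shows "card A \<le> card T"
  using independent_span_bound[OF \<open>finite T\<close> _ \<open>f ` A \<subseteq> span T\<close>]
    independent_family_image[OF assms(1,3)] by (simp add: card_image)

lemma card_le_if_independent_combinations:
  assumes "finite A" "finite B"
    and indep: "\<And>c. (\<Sum>\<alpha>\<in>A. scale (c \<alpha>) (G \<alpha>)) = 0 \<Longrightarrow> \<forall>\<alpha>\<in>A. c \<alpha> = 0"
    and G_eq: "\<And>\<alpha>. \<alpha> \<in> A \<Longrightarrow> G \<alpha> = (\<Sum>\<beta>\<in>B. scale (C \<beta> \<alpha>) (H \<beta>))"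
    and vanish: "\<And>\<alpha> \<beta>. \<alpha> \<in> A \<Longrightarrow> \<beta> \<in> Z \<Longrightarrow> C \<beta> \<alpha> = 0"
  shows "card A \<le> card (B - Z)"
proof -
  have "G \<alpha> \<in> span (H ` (B - Z))" if "\<alpha> \<in> A" for \<alpha>
    unfolding G_eq[OF that]
  proof (rule span_sum)
    fix \<beta> assume "\<beta> \<in> B"
    show "scale (C \<beta> \<alpha>) (H \<beta>) \<in> span (H ` (B - Z))"
    proof (cases "\<beta> \<in> Z")
      case True
      then show ?thesis using vanish[OF that] by (simp add: span_zero)
    next
      case False
      with \<open>\<beta> \<in> B\<close> show ?thesis by (simp add: span_base span_scale)
    qed
  qed
  then have "card A \<le> card (H ` (B - Z))"
    using assms(1,2) indep by (intro card_le_if_independent_family_in_span) auto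
  also have "\<dots> \<le> card (B - Z)"
    by (rule card_image_le) (use \<open>finite B\<close> in simp)
  finally show ?thesis .
qed

end

(* Function types have no real_vector instance, so the forms are made a vector space through
   the locale; addition and zero are pointwise, from Function_Algebras. *)
definition form_scale :: "real \<Rightarrow> ('a \<Rightarrow> 'b \<Rightarrow> real) \<Rightarrow> 'a \<Rightarrow> 'b \<Rightarrow> real" where
  "form_scale c b = (\<lambda>x y. c * b x y)"

interpretation form_space: vector_space form_scale
  by unfold_locales (auto simp: form_scale_def fun_eq_iff algebra_simps)

lemma sum_form_scale_apply:
  "(\<Sum>i\<in>A. form_scale (c i) (b i)) x y = (\<Sum>i\<in>A. c i * b i x y)"
  by (simp add: sum_fun_apply form_scale_def)

lemma exists_nonzero_coeff:
  fixes gbar G :: "nat \<Rightarrow> 'a \<Rightarrow> 'b \<Rightarrow> real" and \<Theta> :: "'a \<Rightarrow> 'b \<Rightarrow> real"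
    and C :: "nat \<Rightarrow> nat \<Rightarrow> real"
  assumes indep: "\<forall>c::nat \<Rightarrow> real. (\<forall>X Y. (\<Sum>\<alpha>=1..r+1. c \<alpha> * gbar \<alpha> X Y) = 0)
                    \<longrightarrow> (\<forall>\<alpha>\<in>{1..r+1}. c \<alpha> = 0)"
    and gbar_eq: "\<forall>\<alpha>\<in>{2..r+1}. \<forall>X Y. gbar \<alpha> X Y =
                    (\<Sum>\<beta>=1..r. C \<beta> \<alpha> * G \<beta> X Y) + C (r+1) \<alpha> * \<Theta> X Y"
    and C_r: "\<forall>\<alpha>\<in>{2..r+1}. C r \<alpha> = 0"
    and \<beta>: "\<beta> \<in> {1..r-1}"
  shows "\<exists>\<alpha>\<in>{2..r+1}. C \<beta> \<alpha> \<noteq> 0"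
proof (rule ccontr)
  assume C_\<beta>: "\<not> (\<exists>\<alpha>\<in>{2..r+1}. C \<beta> \<alpha> \<noteq> 0)"
  define H where "H = G(r+1 := \<Theta>)"
  have "card {2..r+1} \<le> card ({1..r+1} - {r, \<beta>})"
  proof (rule form_space.card_le_if_independent_combinations[where G = gbar and H = H and C = C])
    fix c assume c: "(\<Sum>\<alpha>=2..r+1. form_scale (c \<alpha>) (gbar \<alpha>)) = 0"
    have "(\<Sum>\<alpha>=1..r+1. (c(1 := 0)) \<alpha> * gbar \<alpha> X Y) = 0" for X Y
    proof -
      have "(\<Sum>\<alpha>=1..r+1. (c(1 := 0)) \<alpha> * gbar \<alpha> X Y) = (\<Sum>\<alpha>=2..r+1. c \<alpha> * gbar \<alpha> X Y)"
        by (simp add: sum.atLeast_Suc_atMost numeral_2_eq_2)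
      also have "\<dots> = 0"
        using fun_cong[OF fun_cong[OF c], of X Y] by (simp only: sum_form_scale_apply zero_fun_apply)
      finally show ?thesis .
    qed
    then have c0: "\<forall>\<alpha>\<in>{1..r+1}. (c(1 := 0)) \<alpha> = 0"
      using indep by blast
    show "\<forall>\<alpha>\<in>{2..r+1}. c \<alpha> = 0"
    proof
      fix \<alpha> assume "\<alpha> \<in> {2..r+1}"
      then have "\<alpha> \<in> {1..r+1}" "\<alpha> \<noteq> 1" by auto
      with c0 show "c \<alpha> = 0" by force
    qed
  next
    fix \<alpha> assume \<alpha>: "\<alpha> \<in> {2..r+1}"
    have combination: "(\<Sum>\<beta>\<in>{1..r+1}. C \<beta> \<alpha> * H \<beta> X Y) = gbar \<alpha> X Y" for X Y
    proof -
      have "(\<Sum>\<beta>=1..r. C \<beta> \<alpha> * H \<beta> X Y) = (\<Sum>\<beta>=1..r. C \<beta> \<alpha> * G \<beta> X Y)"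
        by (rule sum.cong) (auto simp: H_def)
      then show ?thesis
        using gbar_eq \<alpha> by (simp add: H_def)
    qed
    show "gbar \<alpha> = (\<Sum>\<beta>\<in>{1..r+1}. form_scale (C \<beta> \<alpha>) (H \<beta>))"
      by (intro ext) (simp only: sum_form_scale_apply combination)
  qed (use C_r C_\<beta> in auto)
  moreover have "card ({1..r+1} - {r, \<beta>}) = r - 1"
    using \<beta> by (subst card_Diff_subset) auto
  ultimately show False using \<beta> by simp
qed

lemma exists_dual_vector:
  assumes "bilinear g" "subspace U" "nondeg_on g U" "p \<in> U" "p \<noteq> 0"
  shows "\<exists>y\<in>U. g p y = 1"
proof -
  obtain y where "y \<in> U" "g p y \<noteq> 0"
    using assms(3-5) unfolding nondeg_on_def by blast
  then show ?thesis
    by (intro bexI[of _ "(1 / g p y) *\<^sub>R y"]) (auto simp: bilinear_rmul assms(1,2) subspace_scale)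
qed

lemma multiple_if_orthogonal_to_ker:
  assumes g: "bilinear g" and U: "subspace U" "nondeg_on g U" and p: "p \<in> U" "p \<noteq> 0"
    and "X \<in> U" and orth: "\<And>Y. Y \<in> U \<Longrightarrow> g p Y = 0 \<Longrightarrow> g X Y = 0"
  shows "\<exists>t. X = t *\<^sub>R p"
proof -
  obtain Y0 where Y0: "Y0 \<in> U" "g p Y0 = 1"
    using exists_dual_vector[OF g U p] by blast
  define t where "t = g X Y0"
  have "g (X - t *\<^sub>R p) Y = 0" if "Y \<in> U" for Y
  proof -
    have "Y - g p Y *\<^sub>R Y0 \<in> U"
      using U(1) Y0(1) that by (simp add: subspace_diff subspace_scale)
    moreover have "g p (Y - g p Y *\<^sub>R Y0) = 0"
      using Y0(2) by (simp add: g bilinear_rsub bilinear_rmul)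
    ultimately have "g X (Y - g p Y *\<^sub>R Y0) = 0"
      by (rule orth)
    then show ?thesis
      by (simp add: t_def g bilinear_rsub bilinear_lsub bilinear_rmul bilinear_lmul algebra_simps)
  qed
  moreover have "X - t *\<^sub>R p \<in> U"
    using U(1) p(1) \<open>X \<in> U\<close> by (simp add: subspace_diff subspace_scale)
  ultimately have "X - t *\<^sub>R p = 0"
    using U(2) unfolding nondeg_on_def by blast
  then show ?thesis by auto
qed

locale orthogonal_decomposition =
  fixes g :: "'v::real_vector \<Rightarrow> 'v \<Rightarrow> real" and E :: "nat \<Rightarrow> 'v set" and r :: nat
  assumes g_bilinear: "bilinear g"
    and r_pos: "1 \<le> r"
    and E_subspace: "\<And>\<beta>. \<beta> \<in> {1..r} \<Longrightarrow> subspace (E \<beta>)"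
    and E_direct_sum: "direct_sum E r"
    and E_orthogonal: "\<And>\<beta> \<gamma> x y. \<beta> \<in> {1..r} \<Longrightarrow> \<gamma> \<in> {1..r} \<Longrightarrow> \<beta> \<noteq> \<gamma> \<Longrightarrow>
                         x \<in> E \<beta> \<Longrightarrow> y \<in> E \<gamma> \<Longrightarrow> g x y = 0"
    and E_nondeg: "\<And>\<beta>. \<beta> \<in> {1..r} \<Longrightarrow> nondeg_on g (E \<beta>)"
begin

lemma last_index: "r \<in> {1..r}"
  using r_pos by simp

lemma is_decomp_component: "is_decomp E r v (\<lambda>\<beta>. component E r \<beta> v)"
  unfolding component_def
  using theI'[OF E_direct_sum[unfolded direct_sum_def, rule_format, of v]] by simp

lemma component_mem: "\<beta> \<in> {1..r} \<Longrightarrow> component E r \<beta> v \<in> E \<beta>"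
  using is_decomp_component[of v] unfolding is_decomp_def by blast

lemma sum_component: "(\<Sum>\<beta>=1..r. component E r \<beta> v) = v"
  using is_decomp_component[of v] unfolding is_decomp_def by simp

lemma sum_component_split: "(\<Sum>\<beta>=1..r-1. component E r \<beta> v) + component E r r v = v"
proof -
  have "{1..r} = insert r {1..r-1}" "r \<notin> {1..r-1}"
    using r_pos by auto
  then show ?thesis
    using sum_component[of v] by (simp add: add.commute)
qed

lemma component_of_mem:
  assumes "\<gamma> \<in> {1..r}" "Y \<in> E \<gamma>"
  shows "component E r \<beta> Y = (if \<beta> = \<gamma> then Y else 0)"
proof -
  have "is_decomp E r Y (\<lambda>\<beta>. if \<beta> = \<gamma> then Y else 0)"
    unfolding is_decomp_def using assms by (auto simp: sum.delta intro!: subspace_0 E_subspace)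
  then have "(\<lambda>\<beta>. component E r \<beta> Y) = (\<lambda>\<beta>. if \<beta> = \<gamma> then Y else 0)"
    using E_direct_sum is_decomp_component unfolding direct_sum_def by blast
  then show ?thesis by metis
qed

lemma sum_g_comp_right_mem:
  assumes "\<gamma> \<in> {1..r}" "Y \<in> E \<gamma>"
  shows "(\<Sum>\<beta>=1..r. c \<beta> * g_comp g E r \<beta> X Y) = c \<gamma> * g (component E r \<gamma> X) Y"
proof -
  have "(\<Sum>\<beta>=1..r. c \<beta> * g_comp g E r \<beta> X Y) =
      (\<Sum>\<beta>=1..r. if \<beta> = \<gamma> then c \<gamma> * g (component E r \<gamma> X) Y else 0)"
    by (rule sum.cong) (auto simp: g_comp_def component_of_mem[OF assms] bilinear_rzero[OF g_bilinear])
  then show ?thesis using assms(1) by (simp add: sum.delta)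
qed

lemma sum_g_comp_left_mem:
  assumes "\<gamma> \<in> {1..r}" "X \<in> E \<gamma>"
  shows "(\<Sum>\<beta>=1..r. c \<beta> * g_comp g E r \<beta> X Y) = c \<gamma> * g X (component E r \<gamma> Y)"
proof -
  have "(\<Sum>\<beta>=1..r. c \<beta> * g_comp g E r \<beta> X Y) =
      (\<Sum>\<beta>=1..r. if \<beta> = \<gamma> then c \<gamma> * g X (component E r \<gamma> Y) else 0)"
    by (rule sum.cong) (auto simp: g_comp_def component_of_mem[OF assms] bilinear_lzero[OF g_bilinear])
  then show ?thesis using assms(1) by (simp add: sum.delta)
qed

lemma sum_orthogonal_last:
  assumes "\<And>\<beta>. \<beta> \<in> {1..r-1} \<Longrightarrow> x \<beta> \<in> E \<beta>" and "Y \<in> E r"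
  shows "g (\<Sum>\<beta>=1..r-1. x \<beta>) Y = 0"
proof -
  have "linear (\<lambda>x. g x Y)"
    using g_bilinear unfolding bilinear_def by blast
  then have "g (\<Sum>\<beta>=1..r-1. x \<beta>) Y = (\<Sum>\<beta>=1..r-1. g (x \<beta>) Y)"
    using linear_sum[of "\<lambda>x. g x Y" x "{1..r-1}"] by simp
  also have "\<dots> = 0"
  proof (rule sum.neutral, rule ballI)
    fix \<beta> assume "\<beta> \<in> {1..r-1}"
    then show "g (x \<beta>) Y = 0"
      using E_orthogonal[of \<beta> r "x \<beta>" Y] assms by auto
  qed
  finally show ?thesis .
qed

lemma Inter_form_ker_eq:
  fixes gbar :: "nat \<Rightarrow> 'v \<Rightarrow> 'v \<Rightarrow> real" and C :: "nat \<Rightarrow> nat \<Rightarrow> real"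
  assumes p: "p \<in> E r" "p \<noteq> 0"
    and gbar_eq: "\<And>\<alpha> X Y. \<alpha> \<in> A \<Longrightarrow> gbar \<alpha> X Y =
                   (\<Sum>\<beta>=1..r. C \<beta> \<alpha> * g_comp g E r \<beta> X Y) + C (r+1) \<alpha> * (g p X * g p Y)"
    and C_r: "\<And>\<alpha>. \<alpha> \<in> A \<Longrightarrow> C r \<alpha> = 0"
    and C_r1: "\<exists>\<alpha>\<in>A. C (r+1) \<alpha> \<noteq> 0"
    and C_row_nonzero: "\<And>\<beta>. \<beta> \<in> {1..r-1} \<Longrightarrow> \<exists>\<alpha>\<in>A. C \<beta> \<alpha> \<noteq> 0"
  shows "(\<Inter>\<alpha>\<in>A. form_ker (gbar \<alpha>)) = {X \<in> E r. g p X = 0}"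
proof (intro equalityI subsetI)
  fix X assume "X \<in> (\<Inter>\<alpha>\<in>A. form_ker (gbar \<alpha>))"
  then have ker: "gbar \<alpha> X Y = 0" if "\<alpha> \<in> A" for \<alpha> Y
    using that by (auto simp: form_ker_def)
  have gbar_on_summand: "gbar \<alpha> X Y = C \<gamma> \<alpha> * g (component E r \<gamma> X) Y + C (r+1) \<alpha> * (g p X * g p Y)"
    if "\<alpha> \<in> A" "\<gamma> \<in> {1..r}" "Y \<in> E \<gamma>" for \<alpha> \<gamma> Y
    using gbar_eq[OF that(1)] sum_g_comp_right_mem[OF that(2,3)] by simp
  obtain Y0 where Y0: "Y0 \<in> E r" "g p Y0 = 1"
    using exists_dual_vector[OF g_bilinear E_subspace E_nondeg p] last_index by blast
  obtain \<alpha>0 where "\<alpha>0 \<in> A" "C (r+1) \<alpha>0 \<noteq> 0"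
    using C_r1 by blast
  then have \<theta>X: "g p X = 0"
    using ker[of \<alpha>0 Y0] gbar_on_summand[OF _ last_index Y0(1)] C_r Y0(2) by simp
  have "component E r \<beta> X = 0" if \<beta>: "\<beta> \<in> {1..r-1}" for \<beta>
  proof -
    have \<beta>': "\<beta> \<in> {1..r}"
      using \<beta> by auto
    obtain \<alpha> where \<alpha>: "\<alpha> \<in> A" "C \<beta> \<alpha> \<noteq> 0"
      using C_row_nonzero[OF \<beta>] by blast
    have "g (component E r \<beta> X) Y = 0" if "Y \<in> E \<beta>" for Y
      using ker[OF \<alpha>(1), of Y] gbar_on_summand[OF \<alpha>(1) \<beta>' that] \<alpha>(2) \<theta>X by simp
    then show ?thesis
      using E_nondeg[OF \<beta>'] component_mem[OF \<beta>'] unfolding nondeg_on_def by blast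
  qed
  then have "component E r r X = X"
    using sum_component_split[of X] by simp
  then show "X \<in> {X \<in> E r. g p X = 0}"
    using component_mem[OF last_index, of X] \<theta>X by simp
next
  fix X assume X: "X \<in> {X \<in> E r. g p X = 0}"
  have "gbar \<alpha> X Y = 0" if "\<alpha> \<in> A" for \<alpha> Y
    using gbar_eq[OF that] sum_g_comp_left_mem[OF last_index, of X] C_r[OF that] X by simp
  then show "X \<in> (\<Inter>\<alpha>\<in>A. form_ker (gbar \<alpha>))"
    by (simp add: form_ker_def)
qed

lemma g_perp_eq:
  assumes p: "p \<in> E r" "p \<noteq> 0"
  shows "g_perp g {X \<in> E r. g p X = 0} =
           {(\<Sum>\<beta>=1..r-1. x \<beta>) + t *\<^sub>R p | x t. \<forall>\<beta>\<in>{1..r-1}. x \<beta> \<in> E \<beta>}"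
proof (intro equalityI subsetI)
  fix X assume X: "X \<in> g_perp g {X \<in> E r. g p X = 0}"
  have lower: "component E r \<beta> X \<in> E \<beta>" if "\<beta> \<in> {1..r-1}" for \<beta>
    using that by (intro component_mem) auto
  have "g (component E r r X) Y = 0" if "Y \<in> E r" "g p Y = 0" for Y
  proof -
    have "g X Y = 0"
      using X that unfolding g_perp_def by blast
    moreover have "g X Y = g (\<Sum>\<beta>=1..r-1. component E r \<beta> X) Y + g (component E r r X) Y"
      by (subst (1) sum_component_split[symmetric, of X]) (simp add: bilinear_ladd[OF g_bilinear])
    ultimately show ?thesis
      using sum_orthogonal_last[OF lower that(1)] by simp
  qed
  then obtain t where "component E r r X = t *\<^sub>R p"
    using multiple_if_orthogonal_to_ker[OF g_bilinear E_subspace E_nondeg p]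
      component_mem last_index by blast
  then have "X = (\<Sum>\<beta>=1..r-1. component E r \<beta> X) + t *\<^sub>R p"
    using sum_component_split[of X] by simp
  with lower show "X \<in> {(\<Sum>\<beta>=1..r-1. x \<beta>) + t *\<^sub>R p | x t. \<forall>\<beta>\<in>{1..r-1}. x \<beta> \<in> E \<beta>}"
    by blast
next
  fix X assume "X \<in> {(\<Sum>\<beta>=1..r-1. x \<beta>) + t *\<^sub>R p | x t. \<forall>\<beta>\<in>{1..r-1}. x \<beta> \<in> E \<beta>}"
  then obtain x t where X: "X = (\<Sum>\<beta>=1..r-1. x \<beta>) + t *\<^sub>R p" "\<forall>\<beta>\<in>{1..r-1}. x \<beta> \<in> E \<beta>"
    by blast
  have "g X Y = 0" if "Y \<in> {X \<in> E r. g p X = 0}" for Y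
    using that sum_orthogonal_last[of x Y] X
    by (simp add: bilinear_ladd[OF g_bilinear] bilinear_lmul[OF g_bilinear])
  then show "X \<in> g_perp g {X \<in> E r. g p X = 0}"
    unfolding g_perp_def by blast
qed

end

theorem lemma2:
  fixes g :: "'v::euclidean_space \<Rightarrow> 'v \<Rightarrow> real"
    and E :: "nat \<Rightarrow> 'v set" and r :: nat and p :: 'v
    and gbar :: "nat \<Rightarrow> 'v \<Rightarrow> 'v \<Rightarrow> real" and C :: "nat \<Rightarrow> nat \<Rightarrow> real"
  assumes r: "r \<ge> 1"
    and g_sym: "sym_bilinear g"
    and g_lor: "lorentzian_on g UNIV"
    and E_sub: "\<forall>\<beta>\<in>{1..r}. subspace (E \<beta>)"
    and E_ds: "direct_sum E r"
    and E_orth: "\<forall>\<beta>\<in>{1..r}. \<forall>\<gamma>\<in>{1..r}. \<beta> \<noteq> \<gamma> \<longrightarrow> (\<forall>x\<in>E \<beta>. \<forall>y\<in>E \<gamma>. g x y = 0)"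
    and E_nondeg: "\<forall>\<beta>\<in>{1..r}. nondeg_on g (E \<beta>)"
    and Er_lor: "lorentzian_on g (E r)"
    and p_in: "p \<in> E r" and p_nz: "p \<noteq> 0" and p_null: "g p p = 0"
    and gbar1: "gbar 1 = g"
    and gbar_sym: "\<forall>\<alpha>\<in>{1..r+1}. sym_bilinear (gbar \<alpha>)"
    and gbar_indep: "\<forall>c::nat \<Rightarrow> real. (\<forall>X Y. (\<Sum>\<alpha>=1..r+1. c \<alpha> * gbar \<alpha> X Y) = 0)
                        \<longrightarrow> (\<forall>\<alpha>\<in>{1..r+1}. c \<alpha> = 0)"
    and gbar_eq: "\<forall>\<alpha>\<in>{1..r+1}. \<forall>X Y. gbar \<alpha> X Y =
                    (\<Sum>\<beta>=1..r. C \<beta> \<alpha> * g_comp g E r \<beta> X Y) + C (r+1) \<alpha> * (g p X * g p Y)"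
    and C_r: "\<forall>\<alpha>\<in>{2..r+1}. C r \<alpha> = 0"
    and C_r1: "\<forall>\<alpha>\<in>{2..r+1}. C (r+1) \<alpha> \<noteq> 0"
  shows "(\<Inter>\<alpha>\<in>{2..r+1}. form_ker (gbar \<alpha>)) = {X \<in> E r. g p X = 0}
     \<and> g_perp g (\<Inter>\<alpha>\<in>{2..r+1}. form_ker (gbar \<alpha>)) =
        {(\<Sum>\<beta>=1..r-1. x \<beta>) + t *\<^sub>R p | x t. \<forall>\<beta>\<in>{1..r-1}. x \<beta> \<in> E \<beta>}"
proof -
  have g_bilinear: "bilinear g"
    using g_sym unfolding sym_bilinear_def by blast
  interpret orthogonal_decomposition g E r
    using g_bilinear r E_sub E_ds E_orth E_nondeg by unfold_locales auto
  have C_row_nonzero: "\<exists>\<alpha>\<in>{2..r+1}. C \<beta> \<alpha> \<noteq> 0" if "\<beta> \<in> {1..r-1}" for \<beta>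
    using exists_nonzero_coeff[where G = "g_comp g E r" and \<Theta> = "\<lambda>X Y. g p X * g p Y"]
      gbar_indep gbar_eq C_r that by simp
  have W: "(\<Inter>\<alpha>\<in>{2..r+1}. form_ker (gbar \<alpha>)) = {X \<in> E r. g p X = 0}"
  proof (rule Inter_form_ker_eq[OF p_in p_nz])
    show "\<exists>\<alpha>\<in>{2..r+1}. C (r+1) \<alpha> \<noteq> 0"
      using C_r1 r by force
  qed (use gbar_eq C_r C_row_nonzero in auto)
  show ?thesis
    using W g_perp_eq[OF p_in p_nz] by simp
qed

end
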